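(* Let $\lambda>0$, $\rho>1$, let $X_1,X_2,\ldots$ be i.i.d. $\mathrm{Exp}(\lambda)$ and $M_n\coloneqq\frac{\log X_{(n)}-\log X_{(1)}}{\log\rho}+1$ where $X_{(1)},X_{(n)}$ are the minimum and maximum of $X_1,\ldots,X_n$. Then as $n\to\infty$, \[Y_n\coloneqq(M_n-1)\log\rho-\log n-\log\log n\implies\mathrm{Gumbel}(0,1),\] which implies that, for $n$ large, \[M_n\stackrel{\cdot}{\sim}\mathrm{Gumbel}\!\left(1+\frac{\log n+\log\log n}{\log\rho},\frac{1}{\log\rho}\right),\qquad \mathbb{E}M_n\sim1+\gamma+\frac{\log n+\log\log n}{\log\rho}\sim\frac{\log n}{\log\rho},\] \[\mathrm{Var}(M_n)\sim\frac{\pi^2}{6\log^2\rho},\qquad\mathrm{Skew}(M_n)\sim\frac{12\sqrt6\,\zeta(3)}{\pi^3}.\]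
   Context: $\mathrm{Exp}(\lambda)$ has density $\lambda e^{-\lambda x}$ on $(0,\infty)$. $\mathrm{Gumbel}(\mu,\sigma)$ has CDF $\exp(-\exp(-(x-\mu)/\sigma))$ on $\mathbb{R}$. $\implies$ denotes convergence in distribution; $X\stackrel{\cdot}{\sim}F$ means the law of $X$ is approximately $F$; $a_n\sim b_n$ means $a_n/b_n\to1$. $\gamma$ is Euler's constant, $\zeta(3)=\sum_{k\ge1}k^{-3}$, and $\mathrm{Skew}(X)=\mathbb{E}[((X-\mathbb{E}X)/\sqrt{\mathrm{Var}(X)})^3]$. *)

theory Defs
  imports "HOL-Probability.Probability" "HOL-Library.Landau_Symbols"
begin

definition gumbel_cdf :: "real \<Rightarrow> real \<Rightarrow> real \<Rightarrow> real" where
  "gumbel_cdf mu s x = exp (- exp (- (x - mu) / s))"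

definition (in prob_space) skewness :: "('a \<Rightarrow> real) \<Rightarrow> real" where
  "skewness Z = expectation (\<lambda>w. ((Z w - expectation Z) / sqrt (variance Z)) ^ 3)"

definition zeta3 :: real where
  "zeta3 = (\<Sum>k. 1 / (real (Suc k)) ^ 3)"

end

theory Submission
  imports Defs "HOL-Real_Asymp.Real_Asymp"
begin

text \<open>
  With \<open>U\<^sub>i = l X\<^sub>i\<close>, which are i.i.d. standard exponential, the centred log-range
  \<open>Y\<^sub>n = (M\<^sub>n - 1) ln \<rho> - ln n - ln ln n\<close> splits as \<open>Z\<^sub>n + W\<^sub>n\<close> with
  \<open>Z\<^sub>n = - ln (n min\<^sub>i U\<^sub>i)\<close> and \<open>W\<^sub>n = ln (max\<^sub>i U\<^sub>i / ln n)\<close>.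
  Since \<open>n min\<^sub>i U\<^sub>i\<close> is again standard exponential, every \<open>Z\<^sub>n\<close> is exactly
  standard Gumbel, the law of \<open>- ln E\<close> for \<open>E \<sim> Exp(1)\<close>.  The maximum concentrates at
  \<open>ln n\<close>: its excess over \<open>ln n\<close> has exponential tails, and it falls below
  \<open>e\<^sup>-\<^sup>\<epsilon> ln n\<close> with probability at most \<open>exp (- n\<^sup>1\<^sup>-\<^sup>e\<^sup>-\<^sup>\<epsilon>)\<close>;
  hence \<open>E |W\<^sub>n|\<^sup>3 \<rightarrow> 0\<close>.  So \<open>Y\<^sub>n\<close> converges to the Gumbel law in distribution
  and in its first three moments.  These moments are the Taylor coefficients at 0 of the Gumbel
  moment generating function \<open>\<Gamma>(1 - s)\<close>, computed from \<open>\<psi>(1) = -\<gamma>\<close>,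
  \<open>\<psi>'(1) = \<pi>\<^sup>2/6\<close> and \<open>\<psi>''(1) = -2 \<zeta>(3)\<close>.  Mean, variance and skewness of the
  affine image \<open>M\<^sub>n\<close> of \<open>Y\<^sub>n\<close> follow.
\<close>

section \<open>Moments of the standard Gumbel law\<close>

lemma has_bochner_integral_gumbel_mgf:
  assumes "s < 1"
  shows "has_bochner_integral lborel (\<lambda>t. exponential_density 1 t * exp (s * - ln t)) (Gamma (1 - s))"
proof (rule has_bochner_integral_nn_integral)
  have "(\<integral>\<^sup>+t. ennreal (exponential_density 1 t * exp (s * - ln t)) \<partial>lborel)
      = (\<integral>\<^sup>+t. ennreal (indicator {0..} t * t powr ((1 - s) - 1) / exp t) \<partial>lborel)"
    using AE_lborel_singleton[of 0]
    by (intro nn_integral_cong_AE, eventually_elim)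
       (auto simp: exponential_density_def powr_def exp_minus field_simps)
  also have "\<dots> = ennreal (Gamma (1 - s))"
    using Gamma_conv_nn_integral_real[of "1 - s"] assms by simp
  finally show "(\<integral>\<^sup>+t. ennreal (exponential_density 1 t * exp (s * - ln t)) \<partial>lborel)
      = ennreal (Gamma (1 - s))" .
qed (use assms in \<open>auto simp: exponential_density_def\<close>)

lemma integrable_exponential_density_exp_abs_ln:
  assumes "\<bar>s\<bar> < 1"
  shows "integrable lborel (\<lambda>t. exponential_density 1 t * exp (s * \<bar>ln t\<bar>))"
proof (rule Bochner_Integration.integrable_bound)
  let ?f = "\<lambda>s t. exponential_density 1 t * exp (s * - ln t)"
  show "integrable lborel (\<lambda>t. ?f s t + ?f (- s) t)"
    using has_bochner_integral_gumbel_mgf[of s] has_bochner_integral_gumbel_mgf[of "- s"] assms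
    by (intro Bochner_Integration.integrable_add) (auto simp: has_bochner_integral_iff)
  have "exp (s * \<bar>ln t\<bar>) \<le> exp (s * - ln t) + exp (- s * - ln t)" for t
    by (cases "0 \<le> ln t") (auto simp: add_increasing add_increasing2)
  then show "AE t in lborel. norm (exponential_density 1 t * exp (s * \<bar>ln t\<bar>)) \<le> norm (?f s t + ?f (- s) t)"
    by (intro AE_I2) (auto simp: exponential_density_def distrib_left[symmetric] mult_left_mono)
qed simp

lemma power_div_fact_le_exp:
  assumes "0 \<le> (y::real)"
  shows "y ^ k / fact k \<le> exp y"
proof -
  have "(\<Sum>n\<in>{k}. y ^ n /\<^sub>R fact n) \<le> (\<Sum>n. y ^ n /\<^sub>R fact n)"
    using assms by (intro sum_le_suminf summable_exp_generic) auto
  then show ?thesis by (simp add: exp_def field_simps)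
qed

lemma integrable_exponential_density_abs_ln_power:
  "integrable lborel (\<lambda>t. exponential_density 1 t * \<bar>ln t\<bar> ^ k)"
proof (rule Bochner_Integration.integrable_bound)
  show "integrable lborel (\<lambda>t. (fact k * 2 ^ k) * (exponential_density 1 t * exp (1/2 * \<bar>ln t\<bar>)))"
    using integrable_exponential_density_exp_abs_ln[of "1/2"] by simp
  have "\<bar>ln t\<bar> ^ k \<le> fact k * 2 ^ k * exp (1/2 * \<bar>ln t\<bar>)" for t :: real
    using power_div_fact_le_exp[of "\<bar>ln t\<bar> / 2" k] by (simp add: field_simps power_divide)
  then show "AE t in lborel. norm (exponential_density 1 t * \<bar>ln t\<bar> ^ k)
      \<le> norm ((fact k * 2 ^ k) * (exponential_density 1 t * exp (1/2 * \<bar>ln t\<bar>)))"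
    by (intro AE_I2) (auto simp: exponential_density_def mult_left_mono mult_ac)
qed simp

lemma integrable_exponential_density_neg_ln_power:
  "integrable lborel (\<lambda>t. exponential_density 1 t * (- ln t) ^ k)"
  by (rule Bochner_Integration.integrable_bound[OF integrable_exponential_density_abs_ln_power[of k]])
     (auto simp: exponential_density_def abs_mult power_abs)

definition gumbel_moment :: "nat \<Rightarrow> real" where
  "gumbel_moment k = (\<integral>t. exponential_density 1 t * (- ln t) ^ k \<partial>lborel)"

lemma gumbel_moment_sums_Gamma:
  assumes s: "\<bar>s\<bar> < 1"
  shows "(\<lambda>k. gumbel_moment k / fact k * s ^ k) sums Gamma (1 - s)"
proof -
  let ?ed = "exponential_density 1 :: real \<Rightarrow> real"
  have exp_sums: "(\<lambda>k. y ^ k / fact k) sums exp y" for y :: real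
    using exp_converges[of y] by (simp add: field_simps)
  define f where "f k t = ?ed t * ((s * - ln t) ^ k / fact k)" for k t
  have "f k = (\<lambda>t. s ^ k / fact k * (?ed t * (- ln t) ^ k))" for k
    by (simp add: fun_eq_iff f_def flip: power_mult_distrib)
  then have f_integrable: "integrable lborel (f k)" for k
    using integrable_exponential_density_neg_ln_power by simp
  have f_integral: "integral\<^sup>L lborel (f k) = gumbel_moment k / fact k * s ^ k" for k
    unfolding f_def gumbel_moment_def power_mult_distrib by (simp add: field_simps)
  have f_sums: "(\<lambda>k. f k t) sums (?ed t * exp (s * - ln t))" for t
    unfolding f_def by (intro sums_mult exp_sums)
  have norm_f_sums: "(\<lambda>k. norm (f k t)) sums (?ed t * exp (\<bar>s\<bar> * \<bar>ln t\<bar>))" for t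
  proof -
    have norm_f: "norm (f k t) = ?ed t * ((\<bar>s\<bar> * \<bar>ln t\<bar>) ^ k / fact k)" for k
      by (simp add: f_def abs_mult power_abs exponential_density_def)
    show ?thesis
      unfolding norm_f by (intro sums_mult exp_sums)
  qed
  have "summable (\<lambda>k. \<integral>t. norm (f k t) \<partial>lborel)"
  proof (rule summableI_nonneg_bounded)
    fix N
    have "(\<Sum>k<N. \<integral>t. norm (f k t) \<partial>lborel) = (\<integral>t. (\<Sum>k<N. norm (f k t)) \<partial>lborel)"
      using f_integrable by (simp add: Bochner_Integration.integral_sum)
    also have "\<dots> \<le> (\<integral>t. ?ed t * exp (\<bar>s\<bar> * \<bar>ln t\<bar>) \<partial>lborel)"
    proof (rule Bochner_Integration.integral_mono)
      show "(\<Sum>k<N. norm (f k t)) \<le> ?ed t * exp (\<bar>s\<bar> * \<bar>ln t\<bar>)" for t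
        using sum_le_suminf[OF sums_summable[OF norm_f_sums[of t]], of "{..<N}"] norm_f_sums[of t]
        by (simp add: sums_iff)
    qed (use f_integrable integrable_exponential_density_exp_abs_ln[of "\<bar>s\<bar>"] s in auto)
    finally show "(\<Sum>k<N. \<integral>t. norm (f k t) \<partial>lborel)
        \<le> (\<integral>t. ?ed t * exp (\<bar>s\<bar> * \<bar>ln t\<bar>) \<partial>lborel)" .
  qed simp
  then have "(\<lambda>k. integral\<^sup>L lborel (f k)) sums (\<integral>t. (\<Sum>k. f k t) \<partial>lborel)"
    using f_integrable norm_f_sums by (intro sums_integral) (auto intro: sums_summable)
  moreover have "(\<integral>t. (\<Sum>k. f k t) \<partial>lborel) = Gamma (1 - s)"
    using f_sums has_bochner_integral_gumbel_mgf[of s] s by (simp add: sums_iff has_bochner_integral_iff)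
  ultimately show ?thesis by (simp add: f_integral)
qed

lemma sums_diffs_if_has_field_derivative:
  fixes c :: "nat \<Rightarrow> 'a :: {real_normed_field,banach}"
  assumes sums: "\<And>x. norm x < r \<Longrightarrow> (\<lambda>k. c k * x ^ k) sums f x"
    and deriv: "\<And>x. norm x < r \<Longrightarrow> (f has_field_derivative f' x) (at x)"
    and x: "norm x < r"
  shows "(\<lambda>k. diffs c k * x ^ k) sums f' x"
proof -
  have summable: "summable (\<lambda>k. c k * y ^ k)" if "norm y < r" for y
    using sums[OF that] by (rule sums_summable)
  have "((\<lambda>y. \<Sum>k. c k * y ^ k) has_field_derivative f' x) (at x)"
    by (rule has_field_derivative_transform_within_open[OF deriv[OF x], where S = "ball 0 r"])
       (use x sums in \<open>auto simp: sums_iff\<close>)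
  moreover have "((\<lambda>y. \<Sum>k. c k * y ^ k) has_field_derivative (\<Sum>k. diffs c k * x ^ k)) (at x)"
    using summable x by (rule termdiffs_strong')
  ultimately have "(\<Sum>k. diffs c k * x ^ k) = f' x"
    by (rule DERIV_unique[rotated])
  with termdiff_converges[OF x summable] show ?thesis
    by (simp add: sums_iff)
qed

lemma Polygamma_1_1: "Polygamma 1 (1::real) = pi\<^sup>2 / 6"
proof -
  have "(\<lambda>k. inverse ((1 + real k) ^ 2)) sums (pi\<^sup>2 / 6)"
    using inverse_squares_sums by (simp add: inverse_eq_divide add.commute)
  then show ?thesis
    by (simp add: Polygamma_def sums_iff numeral_2_eq_2 del: power_Suc power_inverse)
qed

lemma Polygamma_2_1: "Polygamma 2 (1::real) = - 2 * zeta3"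
proof -
  have "(\<Sum>k. inverse ((1 + real k) ^ 3)) = zeta3"
    unfolding zeta3_def by (intro suminf_cong) (simp add: inverse_eq_divide add.commute)
  then show ?thesis by (simp add: Polygamma_def numeral_3_eq_3 numeral_2_eq_2)
qed

lemma zeta3_pos: "0 < zeta3"
  using Polygamma_real_even_neg[of 1 2] Polygamma_2_1 by simp

lemma powser_coeffs_eq_derivatives:
  fixes c :: "nat \<Rightarrow> 'a :: {real_normed_field,banach}"
  assumes "0 < r"
    and sums: "\<And>x. norm x < r \<Longrightarrow> (\<lambda>k. c k * x ^ k) sums f x"
    and f: "\<And>x. norm x < r \<Longrightarrow> (f has_field_derivative f1 x) (at x)"
    and f1: "\<And>x. norm x < r \<Longrightarrow> (f1 has_field_derivative f2 x) (at x)"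
    and f2: "\<And>x. norm x < r \<Longrightarrow> (f2 has_field_derivative f3 x) (at x)"
  shows "c 1 = f1 0" "2 * c 2 = f2 0" "6 * c 3 = f3 0"
proof -
  have sums1: "(\<lambda>k. diffs c k * x ^ k) sums f1 x" if "norm x < r" for x
    by (rule sums_diffs_if_has_field_derivative[OF sums f that])
  have sums2: "(\<lambda>k. diffs (diffs c) k * x ^ k) sums f2 x" if "norm x < r" for x
    by (rule sums_diffs_if_has_field_derivative[OF sums1 f1 that])
  have sums3: "(\<lambda>k. diffs (diffs (diffs c)) k * x ^ k) sums f3 x" if "norm x < r" for x
    by (rule sums_diffs_if_has_field_derivative[OF sums2 f2 that])
  have "diffs c 0 = f1 0" "diffs (diffs c) 0 = f2 0" "diffs (diffs (diffs c)) 0 = f3 0"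
    using sums_unique2[OF powser_sums_zero] sums1[of 0] sums2[of 0] sums3[of 0] \<open>0 < r\<close> by simp_all
  then show "c 1 = f1 0" "2 * c 2 = f2 0" "6 * c 3 = f3 0"
    by (simp_all add: diffs_def eval_nat_numeral)
qed

lemma has_field_derivative_Gamma_one_minus:
  "(s::real) < 1 \<Longrightarrow> ((\<lambda>s. Gamma (1 - s)) has_field_derivative - Gamma (1 - s) * Polygamma 0 (1 - s)) (at s)"
  using nonpos_Ints_nonpos[of "1 - s"]
  by (auto intro!: derivative_eq_intros DERIV_chain2[OF has_field_derivative_Gamma])

lemma has_field_derivative_Polygamma_one_minus:
  "(s::real) < 1 \<Longrightarrow> ((\<lambda>s. Polygamma n (1 - s)) has_field_derivative - Polygamma (Suc n) (1 - s)) (at s)"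
  using nonpos_Ints_nonpos[of "1 - s"]
  by (auto intro!: derivative_eq_intros DERIV_chain2[OF has_field_derivative_Polygamma])

lemma gumbel_moment_1_2_3:
  "gumbel_moment 1 = euler_mascheroni"
  "gumbel_moment 2 = euler_mascheroni\<^sup>2 + pi\<^sup>2 / 6"
  "gumbel_moment 3 = euler_mascheroni ^ 3 + euler_mascheroni * pi\<^sup>2 / 2 + 2 * zeta3"
proof -
  define G where "G s = Gamma (1 - s)" for s :: real
  define \<psi> where "\<psi> n s = Polygamma n (1 - s)" for n and s :: real
  define g1 where "g1 s = - G s * \<psi> 0 s" for s
  define g2 where "g2 s = G s * (\<psi> 0 s ^ 2 + \<psi> 1 s)" for s
  define g3 where "g3 s = - G s * (\<psi> 0 s ^ 3 + 3 * \<psi> 0 s * \<psi> 1 s + \<psi> 2 s)" for s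
  have dG: "(G has_field_derivative g1 s) (at s)" and d\<psi>: "(\<psi> n has_field_derivative - \<psi> (Suc n) s) (at s)"
    if "norm s < 1" for n s
    using has_field_derivative_Gamma_one_minus[of s] has_field_derivative_Polygamma_one_minus[of s n] that
    by (auto simp: G_def[abs_def] \<psi>_def[abs_def] g1_def)
  have dg1: "(g1 has_field_derivative g2 s) (at s)" if "norm s < 1" for s
    unfolding g1_def[abs_def]
    by (rule derivative_eq_intros dG d\<psi> that refl)+ (simp add: g1_def g2_def algebra_simps power2_eq_square)
  have dg2: "(g2 has_field_derivative g3 s) (at s)" if "norm s < 1" for s
    unfolding g2_def[abs_def]
    by (rule derivative_eq_intros dG d\<psi> that refl)+
       (simp add: g1_def g3_def algebra_simps power2_eq_square power3_eq_cube eval_nat_numeral)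
  have "(\<lambda>k. gumbel_moment k / fact k * s ^ k) sums G s" if "norm s < 1" for s
    using gumbel_moment_sums_Gamma[of s] that by (simp add: G_def)
  from powser_coeffs_eq_derivatives[OF zero_less_one this dG dg1 dg2]
  have "gumbel_moment 1 = g1 0" "gumbel_moment 2 = g2 0" "gumbel_moment 3 = g3 0"
    by (simp_all add: eval_nat_numeral)
  moreover have "G 0 = 1" "\<psi> 0 0 = - euler_mascheroni" "\<psi> 1 0 = pi\<^sup>2 / 6" "\<psi> 2 0 = - 2 * zeta3"
    unfolding G_def \<psi>_def using Polygamma_1_1 Polygamma_2_1 by simp_all
  ultimately show "gumbel_moment 1 = euler_mascheroni"
    "gumbel_moment 2 = euler_mascheroni\<^sup>2 + pi\<^sup>2 / 6"
    "gumbel_moment 3 = euler_mascheroni ^ 3 + euler_mascheroni * pi\<^sup>2 / 2 + 2 * zeta3"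
    by (simp_all add: g1_def g2_def g3_def algebra_simps power2_eq_square power3_eq_cube)
qed

lemma gumbel_variance: "gumbel_moment 2 - (gumbel_moment 1)\<^sup>2 = pi\<^sup>2 / 6"
  using gumbel_moment_1_2_3 by simp

lemma gumbel_skewness:
  "(gumbel_moment 3 - 3 * gumbel_moment 1 * gumbel_moment 2 + 2 * gumbel_moment 1 ^ 3)
      / sqrt (gumbel_moment 2 - (gumbel_moment 1)\<^sup>2) ^ 3 = 12 * sqrt 6 * zeta3 / pi ^ 3"
proof -
  have "gumbel_moment 3 - 3 * gumbel_moment 1 * gumbel_moment 2 + 2 * gumbel_moment 1 ^ 3 = 2 * zeta3"
    using gumbel_moment_1_2_3 by (simp add: power2_eq_square power3_eq_cube algebra_simps)
  moreover have "sqrt (pi\<^sup>2 / 6) ^ 3 = pi ^ 3 / (6 * sqrt 6)"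
    by (simp add: real_sqrt_divide power_divide power3_eq_cube)
  ultimately show ?thesis
    unfolding gumbel_variance by (simp add: field_simps)
qed

section \<open>Convergence of perturbed random variables\<close>

lemma (in prob_space) tendsto_prob_abs_ge_zero_if_moment:
  fixes W :: "nat \<Rightarrow> 'a \<Rightarrow> real"
  assumes integrable: "\<forall>\<^sub>F n in sequentially. integrable M (\<lambda>w. \<bar>W n w\<bar> ^ p)"
    and moment: "(\<lambda>n. expectation (\<lambda>w. \<bar>W n w\<bar> ^ p)) \<longlonglongrightarrow> 0"
    and "0 < p" "0 < \<epsilon>"
  shows "(\<lambda>n. prob {w \<in> space M. \<epsilon> \<le> \<bar>W n w\<bar>}) \<longlonglongrightarrow> 0"
proof (rule tendsto_sandwich[where f = "\<lambda>_. 0"])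
  show "\<forall>\<^sub>F n in sequentially. prob {w \<in> space M. \<epsilon> \<le> \<bar>W n w\<bar>}
      \<le> expectation (\<lambda>w. \<bar>W n w\<bar> ^ p) / \<epsilon> ^ p"
    using integrable
  proof eventually_elim
    case (elim n)
    have "{w \<in> space M. \<epsilon> \<le> \<bar>W n w\<bar>} = {w \<in> space M. \<epsilon> ^ p \<le> \<bar>W n w\<bar> ^ p}"
      using assms(3,4) by (auto simp: power_mono_iff)
    with elim show ?case
      using assms(4) by (simp add: integral_Markov_inequality_measure[where A = "space M"])
  qed
  show "(\<lambda>n. expectation (\<lambda>w. \<bar>W n w\<bar> ^ p) / \<epsilon> ^ p) \<longlonglongrightarrow> 0"
    using tendsto_divide_zero[OF moment] .
qed auto

lemma (in prob_space) tendsto_prob_add_le_if_small: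
  fixes Z W :: "nat \<Rightarrow> 'a \<Rightarrow> real"
  assumes [measurable]: "\<And>n. Z n \<in> borel_measurable M" "\<And>n. W n \<in> borel_measurable M"
    and law: "\<forall>\<^sub>F n in sequentially. \<forall>t. prob {w \<in> space M. Z n w < t} = F t"
    and cont: "isCont F x"
    and small: "\<And>\<epsilon>. 0 < \<epsilon> \<Longrightarrow> (\<lambda>n. prob {w \<in> space M. \<epsilon> \<le> \<bar>W n w\<bar>}) \<longlonglongrightarrow> 0"
  shows "(\<lambda>n. prob {w \<in> space M. Z n w + W n w \<le> x}) \<longlonglongrightarrow> F x"
proof (rule tendstoI)
  fix e :: real assume "0 < e"
  with cont obtain d where "0 < d" and d: "\<And>y. dist y x < d \<Longrightarrow> dist (F y) (F x) < e / 2"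
    unfolding continuous_at_eps_delta by (meson half_gt_zero)
  define \<epsilon> where "\<epsilon> = d / 2"
  have "0 < \<epsilon>" "dist (F (x + \<epsilon>)) (F x) < e / 2" "dist (F (x - \<epsilon>)) (F x) < e / 2"
    using \<open>0 < d\<close> d by (simp_all add: \<epsilon>_def dist_real_def)
  then have F_close: "F (x + \<epsilon>) < F x + e / 2" "F x - e / 2 < F (x - \<epsilon>)"
    unfolding dist_real_def by arith+
  have "\<forall>\<^sub>F n in sequentially. prob {w \<in> space M. \<epsilon> \<le> \<bar>W n w\<bar>} < e / 2"
    using small[OF \<open>0 < \<epsilon>\<close>] \<open>0 < e\<close> by (intro order_tendstoD(2)) auto
  with law show "\<forall>\<^sub>F n in sequentially. dist (prob {w \<in> space M. Z n w + W n w \<le> x}) (F x) < e"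
  proof eventually_elim
    case (elim n)
    note law = elim(1)[rule_format]
    let ?S = "{w \<in> space M. \<epsilon> \<le> \<bar>W n w\<bar>}"
    have "prob {w \<in> space M. Z n w + W n w \<le> x} \<le> prob ({w \<in> space M. Z n w < x + \<epsilon>} \<union> ?S)"
      by (intro finite_measure_mono) auto
    also have "\<dots> \<le> F (x + \<epsilon>) + prob ?S"
      using measure_Un_le[of "{w \<in> space M. Z n w < x + \<epsilon>}" M ?S] by (simp add: law)
    finally have upper: "prob {w \<in> space M. Z n w + W n w \<le> x} \<le> F (x + \<epsilon>) + prob ?S" .
    have "F (x - \<epsilon>) \<le> prob ({w \<in> space M. Z n w + W n w \<le> x} \<union> ?S)"
      unfolding law[symmetric] by (intro finite_measure_mono) auto
    also have "\<dots> \<le> prob {w \<in> space M. Z n w + W n w \<le> x} + prob ?S"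
      by (intro measure_Un_le) auto
    finally have lower: "F (x - \<epsilon>) \<le> prob {w \<in> space M. Z n w + W n w \<le> x} + prob ?S" .
    with upper elim(2) F_close show "dist (prob {w \<in> space M. Z n w + W n w \<le> x}) (F x) < e"
      unfolding dist_real_def abs_less_iff by linarith
  qed
qed

lemma mixed_power_le_cube_split:
  fixes a b d :: real
  assumes a: "1 \<le> a" and b: "0 \<le> b" and d: "0 < d" "d \<le> 1" and j: "1 \<le> j" "j \<le> 3"
  shows "a ^ (3 - j) * b ^ j \<le> d * a ^ 3 + b ^ 3 / d\<^sup>2"
proof (cases "b \<le> d * a")
  case True
  have "a ^ (3 - j) * b ^ j \<le> a ^ (3 - j) * (d * a) ^ j"
    using a b True by (intro mult_left_mono power_mono) auto
  also have "\<dots> = d ^ j * a ^ 3"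
    using j by (simp add: power_mult_distrib mult_ac flip: power_add)
  also have "\<dots> \<le> d * a ^ 3"
    using power_decreasing[of 1 j d] a d j by (intro mult_right_mono) auto
  finally show ?thesis
    using b d by (simp add: add_increasing2)
next
  case False
  then have "a \<le> b / d"
    using d by (simp add: field_simps)
  then have "a ^ (3 - j) * b ^ j \<le> (b / d) ^ (3 - j) * b ^ j"
    using a b by (intro mult_right_mono power_mono) auto
  also have "\<dots> = b ^ 3 / d ^ (3 - j)"
    using j by (simp add: power_divide flip: power_add)
  also have "\<dots> \<le> b ^ 3 / d\<^sup>2"
    using power_decreasing[of "3 - j" 2 d] b d j by (intro divide_left_mono) auto
  finally show ?thesis
    using a d by (simp add: add_increasing)
qed

lemma abs_power_add_minus_power_le_binomial:
  fixes z w a :: real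
  assumes a: "1 \<le> a" "\<bar>z\<bar> \<le> a" and k: "k \<le> 3"
  shows "\<bar>(z + w) ^ k - z ^ k\<bar> \<le> 3 * (a\<^sup>2 * \<bar>w\<bar>) + 3 * (a * w\<^sup>2) + \<bar>w\<bar> ^ 3"
proof -
  define b where "b = \<bar>w\<bar>"
  have b: "0 \<le> b"
    by (simp add: b_def)
  have "a \<le> a\<^sup>2"
    using mult_right_mono[of 1 a a] a(1) by (simp add: power2_eq_square)
  then have ab: "\<bar>z\<bar> \<le> a\<^sup>2" "b \<le> a\<^sup>2 * b" "b\<^sup>2 \<le> a * b\<^sup>2"
      "\<bar>z\<bar>\<^sup>2 * b \<le> a\<^sup>2 * b" "\<bar>z\<bar> * b\<^sup>2 \<le> a * b\<^sup>2"
    using a b mult_right_mono[of 1 "a\<^sup>2" b] mult_right_mono[of 1 a "b\<^sup>2"] power_mono[OF a(2), of 2]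
    by (auto intro: mult_right_mono)
  have nonneg: "0 \<le> a\<^sup>2 * b" "0 \<le> a * b\<^sup>2" "0 \<le> b ^ 3"
    using a b by auto
  consider "k = 0" | "k = 1" | "k = 2" | "k = 3"
    using k by linarith
  then have "\<bar>(z + w) ^ k - z ^ k\<bar> \<le> 3 * (a\<^sup>2 * b) + 3 * (a * b\<^sup>2) + b ^ 3"
  proof cases
    case 1
    then show ?thesis
      using nonneg by simp
  next
    case 2
    then have "\<bar>(z + w) ^ k - z ^ k\<bar> = b"
      by (simp add: b_def)
    then show ?thesis
      using ab nonneg by linarith
  next
    case 3
    have "\<bar>(z + w) ^ k - z ^ k\<bar> = \<bar>2 * z * w + w\<^sup>2\<bar>"
      using 3 by (simp add: power2_eq_square algebra_simps)
    also have "\<dots> \<le> 2 * \<bar>z\<bar> * b + b\<^sup>2"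
      unfolding b_def by (simp add: abs_mult power2_eq_square abs_triangle_ineq[THEN order_trans])
    finally show ?thesis
      using ab nonneg mult_right_mono[OF ab(1) b] by linarith
  next
    case 4
    have "\<bar>(z + w) ^ k - z ^ k\<bar> = \<bar>3 * z\<^sup>2 * w + 3 * z * w\<^sup>2 + w ^ 3\<bar>"
      using 4 by (simp add: power2_eq_square power3_eq_cube algebra_simps)
    also have "\<dots> \<le> 3 * (\<bar>z\<bar>\<^sup>2 * b) + 3 * (\<bar>z\<bar> * b\<^sup>2) + b ^ 3"
      unfolding b_def by (simp add: abs_mult power_abs abs_triangle_ineq[THEN order_trans] add_mono)
    finally show ?thesis
      using ab by simp
  qed
  then show ?thesis
    by (simp add: b_def)
qed

text \<open>An elementary substitute for Hoelder's inequality: the parameter \<open>d\<close> trades a bounded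
  third moment of \<open>z\<close> against a small third moment of \<open>w\<close>.\<close>

lemma abs_power_add_minus_power_le:
  fixes z w d :: real
  assumes d: "0 < d" "d \<le> 1" and k: "k \<le> 3"
  shows "\<bar>(z + w) ^ k - z ^ k\<bar> \<le> 7 * (d * (1 + \<bar>z\<bar> ^ 3) + \<bar>w\<bar> ^ 3 / d\<^sup>2)"
proof -
  define a where "a = max 1 \<bar>z\<bar>"
  have a: "1 \<le> a" "\<bar>z\<bar> \<le> a"
    by (auto simp: a_def)
  have "\<bar>(z + w) ^ k - z ^ k\<bar> \<le> 3 * (a\<^sup>2 * \<bar>w\<bar>) + 3 * (a * \<bar>w\<bar>\<^sup>2) + \<bar>w\<bar> ^ 3"
    using abs_power_add_minus_power_le_binomial[OF a k] by simp
  also have "\<dots> \<le> 7 * (d * a ^ 3 + \<bar>w\<bar> ^ 3 / d\<^sup>2)"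
    using mixed_power_le_cube_split[OF a(1) abs_ge_zero[of w] d, of 1]
      mixed_power_le_cube_split[OF a(1) abs_ge_zero[of w] d, of 2]
      mixed_power_le_cube_split[OF a(1) abs_ge_zero[of w] d, of 3]
    by (simp add: numeral_eq_Suc)
  also have "d * a ^ 3 \<le> d * (1 + \<bar>z\<bar> ^ 3)"
    using d by (intro mult_left_mono) (auto simp: a_def max_def)
  finally show ?thesis
    by simp
qed

lemma (in prob_space) integrable_power_if_abs_cube:
  fixes f :: "'a \<Rightarrow> real"
  assumes [measurable]: "f \<in> borel_measurable M" and "integrable M (\<lambda>w. \<bar>f w\<bar> ^ 3)" and "k \<le> 3"
  shows "integrable M (\<lambda>w. f w ^ k)"
proof (rule Bochner_Integration.integrable_bound)
  show "integrable M (\<lambda>w. 1 + \<bar>f w\<bar> ^ 3)"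
    using assms(2) by simp
  have "\<bar>f w\<bar> ^ k \<le> 1 + \<bar>f w\<bar> ^ 3" for w
  proof (cases "\<bar>f w\<bar> \<le> 1")
    case True
    then show ?thesis
      using power_le_one[of "\<bar>f w\<bar>" k] zero_le_power[of "\<bar>f w\<bar>" 3] by linarith
  next
    case False
    then show ?thesis
      using power_increasing[OF \<open>k \<le> 3\<close>, of "\<bar>f w\<bar>"] by linarith
  qed
  then show "AE w in M. norm (f w ^ k) \<le> norm (1 + \<bar>f w\<bar> ^ 3)"
    by (simp add: power_abs)
qed simp

lemma abs_add_cube_le: "\<bar>x + y\<bar> ^ 3 \<le> 4 * (\<bar>x\<bar> ^ 3 + \<bar>y\<bar> ^ 3 :: real)"
proof -
  have "(a + b) ^ 3 \<le> 4 * (a ^ 3 + b ^ 3)" if "0 \<le> a" "0 \<le> b" for a b :: real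
    using mult_nonneg_nonneg[OF add_nonneg_nonneg[OF that] zero_le_power2[of "a - b"]]
    by (simp add: power2_eq_square power3_eq_cube algebra_simps)
  then have "(\<bar>x\<bar> + \<bar>y\<bar>) ^ 3 \<le> 4 * (\<bar>x\<bar> ^ 3 + \<bar>y\<bar> ^ 3)"
    by simp
  moreover have "\<bar>x + y\<bar> ^ 3 \<le> (\<bar>x\<bar> + \<bar>y\<bar>) ^ 3"
    by (intro power_mono abs_triangle_ineq) simp
  ultimately show ?thesis
    by linarith
qed

lemma (in prob_space) integrable_abs_cube_add:
  fixes f g :: "'a \<Rightarrow> real"
  assumes [measurable]: "f \<in> borel_measurable M" "g \<in> borel_measurable M"
    and "integrable M (\<lambda>w. \<bar>f w\<bar> ^ 3)" "integrable M (\<lambda>w. \<bar>g w\<bar> ^ 3)"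
  shows "integrable M (\<lambda>w. \<bar>f w + g w\<bar> ^ 3)"
  by (rule Bochner_Integration.integrable_bound[where f = "\<lambda>w. 4 * (\<bar>f w\<bar> ^ 3 + \<bar>g w\<bar> ^ 3)"])
     (use assms(3,4) abs_add_cube_le in auto)

lemma (in prob_space) abs_expectation_power_add_minus_le:
  fixes z w :: "'a \<Rightarrow> real"
  assumes [measurable]: "z \<in> borel_measurable M" "w \<in> borel_measurable M"
    and integrable: "integrable M (\<lambda>x. \<bar>z x\<bar> ^ 3)" "integrable M (\<lambda>x. \<bar>w x\<bar> ^ 3)"
    and "0 < d" "d \<le> 1" "k \<le> 3"
  shows "\<bar>expectation (\<lambda>x. (z x + w x) ^ k) - expectation (\<lambda>x. z x ^ k)\<bar>
    \<le> 7 * (d * (1 + expectation (\<lambda>x. \<bar>z x\<bar> ^ 3)) + expectation (\<lambda>x. \<bar>w x\<bar> ^ 3) / d\<^sup>2)"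
proof -
  have sum_power: "integrable M (\<lambda>x. (z x + w x) ^ k)" and z_power: "integrable M (\<lambda>x. z x ^ k)"
    using integrable_abs_cube_add[OF _ _ integrable] integrable \<open>k \<le> 3\<close>
    by (auto intro: integrable_power_if_abs_cube)
  have "\<bar>expectation (\<lambda>x. (z x + w x) ^ k) - expectation (\<lambda>x. z x ^ k)\<bar>
      = \<bar>expectation (\<lambda>x. (z x + w x) ^ k - z x ^ k)\<bar>"
    using sum_power z_power by simp
  also have "\<dots> \<le> expectation (\<lambda>x. \<bar>(z x + w x) ^ k - z x ^ k\<bar>)"
    using integral_norm_bound[of M "\<lambda>x. (z x + w x) ^ k - z x ^ k"] by simp
  also have "\<dots> \<le> expectation (\<lambda>x. 7 * (d * (1 + \<bar>z x\<bar> ^ 3) + \<bar>w x\<bar> ^ 3 / d\<^sup>2))"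
    using sum_power z_power integrable abs_power_add_minus_power_le[OF assms(5-7)]
    by (intro Bochner_Integration.integral_mono) auto
  also have "\<dots> = 7 * (d * (1 + expectation (\<lambda>x. \<bar>z x\<bar> ^ 3)) + expectation (\<lambda>x. \<bar>w x\<bar> ^ 3) / d\<^sup>2)"
    using integrable by (simp add: prob_space)
  finally show ?thesis .
qed

lemma (in prob_space) tendsto_moment_add_minus_moment:
  fixes Z W :: "nat \<Rightarrow> 'a \<Rightarrow> real"
  assumes [measurable]: "\<And>n. Z n \<in> borel_measurable M" "\<And>n. W n \<in> borel_measurable M"
    and Z_cube: "\<forall>\<^sub>F n in sequentially.
      integrable M (\<lambda>w. \<bar>Z n w\<bar> ^ 3) \<and> expectation (\<lambda>w. \<bar>Z n w\<bar> ^ 3) \<le> C"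
    and W_integrable: "\<forall>\<^sub>F n in sequentially. integrable M (\<lambda>w. \<bar>W n w\<bar> ^ 3)"
    and W_small: "(\<lambda>n. expectation (\<lambda>w. \<bar>W n w\<bar> ^ 3)) \<longlonglongrightarrow> 0"
    and "k \<le> 3"
  shows "(\<lambda>n. expectation (\<lambda>w. (Z n w + W n w) ^ k) - expectation (\<lambda>w. Z n w ^ k)) \<longlonglongrightarrow> 0"
proof (rule tendstoI)
  fix e :: real assume "0 < e"
  define d where "d = min 1 (e / (14 * (1 + \<bar>C\<bar>)))"
  have "d \<le> e / (14 * (1 + \<bar>C\<bar>))"
    by (simp add: d_def)
  then have d: "0 < d" "d \<le> 1" "7 * (d * (1 + \<bar>C\<bar>)) \<le> e / 2"
    using \<open>0 < e\<close> by (auto simp: pos_le_divide_eq mult_ac) (simp_all add: d_def)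
  have "\<forall>\<^sub>F n in sequentially. expectation (\<lambda>w. \<bar>W n w\<bar> ^ 3) < e * d\<^sup>2 / 14"
    using W_small \<open>0 < e\<close> d by (intro order_tendstoD(2)) auto
  with Z_cube W_integrable show "\<forall>\<^sub>F n in sequentially.
      dist (expectation (\<lambda>w. (Z n w + W n w) ^ k) - expectation (\<lambda>w. Z n w ^ k)) 0 < e"
  proof eventually_elim
    case (elim n)
    have "d * (1 + expectation (\<lambda>w. \<bar>Z n w\<bar> ^ 3)) \<le> d * (1 + \<bar>C\<bar>)"
      using elim(1) d by (intro mult_left_mono) auto
    moreover have "expectation (\<lambda>w. \<bar>W n w\<bar> ^ 3) / d\<^sup>2 < e / 14"
      using elim(3) d by (simp add: field_simps)
    moreover have "\<bar>expectation (\<lambda>w. (Z n w + W n w) ^ k) - expectation (\<lambda>w. Z n w ^ k)\<bar>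
        \<le> 7 * (d * (1 + expectation (\<lambda>w. \<bar>Z n w\<bar> ^ 3)) + expectation (\<lambda>w. \<bar>W n w\<bar> ^ 3) / d\<^sup>2)"
      using elim(1,2) d \<open>k \<le> 3\<close> by (intro abs_expectation_power_add_minus_le) auto
    ultimately show ?case
      using d(3) unfolding dist_real_def distrib_left by linarith
  qed
qed

lemma (in prob_space) variance_affine_integrable:
  fixes Y :: "'a \<Rightarrow> real"
  assumes "integrable M Y"
  shows "variance (\<lambda>w. a + b * Y w) = b\<^sup>2 * variance Y"
proof -
  have "variance (\<lambda>w. a + b * Y w) = expectation (\<lambda>w. b\<^sup>2 * (Y w - expectation Y)\<^sup>2)"
    using assms by (simp add: prob_space power2_eq_square algebra_simps)
  then show ?thesis
    by simp
qed

lemma (in prob_space) skewness_affine: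
  fixes Y :: "'a \<Rightarrow> real"
  assumes "integrable M Y" "0 < b"
  shows "skewness (\<lambda>w. a + b * Y w) = skewness Y"
proof -
  have "sqrt (variance (\<lambda>w. a + b * Y w)) = b * sqrt (variance Y)"
    using assms by (subst variance_affine_integrable) (simp_all add: real_sqrt_mult)
  then have "(a + b * Y w - expectation (\<lambda>w. a + b * Y w)) / sqrt (variance (\<lambda>w. a + b * Y w))
      = (Y w - expectation Y) / sqrt (variance Y)" for w
    using assms by (simp add: prob_space right_diff_distrib[symmetric])
  then show ?thesis
    by (simp add: skewness_def)
qed

lemma (in prob_space) skewness_eq_moments:
  fixes Y :: "'a \<Rightarrow> real"
  assumes "integrable M Y" "integrable M (\<lambda>w. Y w ^ 2)" "integrable M (\<lambda>w. Y w ^ 3)"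
  defines "m k \<equiv> expectation (\<lambda>w. Y w ^ k)"
  shows "skewness Y = (m 3 - 3 * m 1 * m 2 + 2 * m 1 ^ 3) / sqrt (m 2 - (m 1)\<^sup>2) ^ 3"
proof -
  define s where "s = sqrt (m 2 - (m 1)\<^sup>2)"
  have "sqrt (variance Y) = s"
    using assms by (simp add: variance_eq s_def m_def)
  moreover have "(Y w - m 1) ^ 3 = Y w ^ 3 - 3 * m 1 * Y w ^ 2 + 3 * (m 1)\<^sup>2 * Y w - m 1 ^ 3" for w
    by (simp add: power2_eq_square power3_eq_cube algebra_simps)
  ultimately have "((Y w - expectation Y) / sqrt (variance Y)) ^ 3
      = (Y w ^ 3 - 3 * m 1 * Y w ^ 2 + 3 * (m 1)\<^sup>2 * Y w - m 1 ^ 3) / s ^ 3" for w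
    by (simp add: m_def power_divide)
  then have "skewness Y = expectation (\<lambda>w. (Y w ^ 3 - 3 * m 1 * Y w ^ 2 + 3 * (m 1)\<^sup>2 * Y w - m 1 ^ 3) / s ^ 3)"
    by (simp add: skewness_def)
  also have "\<dots> = (m 3 - 3 * m 1 * m 2 + 3 * (m 1)\<^sup>2 * m 1 - m 1 ^ 3) / s ^ 3"
    using assms(1-3) by (simp add: m_def prob_space)
  finally show ?thesis
    by (simp add: s_def power2_eq_square power3_eq_cube algebra_simps)
qed

lemma (in prob_space) moments_affine:
  fixes Y :: "'a \<Rightarrow> real"
  assumes "integrable M Y" "integrable M (\<lambda>w. Y w ^ 2)" "integrable M (\<lambda>w. Y w ^ 3)" "0 < b"
  defines "m k \<equiv> expectation (\<lambda>w. Y w ^ k)"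
  shows "expectation (\<lambda>w. a + b * Y w) = a + b * m 1"
    and "variance (\<lambda>w. a + b * Y w) = b\<^sup>2 * (m 2 - (m 1)\<^sup>2)"
    and "skewness (\<lambda>w. a + b * Y w) = (m 3 - 3 * m 1 * m 2 + 2 * m 1 ^ 3) / sqrt (m 2 - (m 1)\<^sup>2) ^ 3"
proof -
  show "expectation (\<lambda>w. a + b * Y w) = a + b * m 1"
    using assms(1) by (simp add: m_def prob_space)
  have "variance Y = m 2 - (m 1)\<^sup>2"
    using assms(1,2) by (simp add: variance_eq m_def)
  then show "variance (\<lambda>w. a + b * Y w) = b\<^sup>2 * (m 2 - (m 1)\<^sup>2)"
    by (subst variance_affine_integrable[OF assms(1)]) simp
  show "skewness (\<lambda>w. a + b * Y w) = (m 3 - 3 * m 1 * m 2 + 2 * m 1 ^ 3) / sqrt (m 2 - (m 1)\<^sup>2) ^ 3"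
    using skewness_affine[OF assms(1,4)] skewness_eq_moments[OF assms(1-3)] by (simp add: m_def)
qed

lemma (in prob_space) tendsto_moments_affine:
  fixes Y :: "nat \<Rightarrow> 'a \<Rightarrow> real"
  assumes [measurable]: "\<And>n. Y n \<in> borel_measurable M"
    and integrable: "\<forall>\<^sub>F n in sequentially. integrable M (\<lambda>w. \<bar>Y n w\<bar> ^ 3)"
    and moments: "\<And>k. k \<le> 3 \<Longrightarrow> (\<lambda>n. expectation (\<lambda>w. Y n w ^ k)) \<longlonglongrightarrow> \<mu> k"
    and "0 < b"
  shows "(\<lambda>n. expectation (\<lambda>w. a n + b * Y n w) - a n) \<longlonglongrightarrow> b * \<mu> 1"
    and "(\<lambda>n. variance (\<lambda>w. a n + b * Y n w)) \<longlonglongrightarrow> b\<^sup>2 * (\<mu> 2 - (\<mu> 1)\<^sup>2)"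
    and "\<mu> 2 \<noteq> (\<mu> 1)\<^sup>2 \<Longrightarrow> (\<lambda>n. skewness (\<lambda>w. a n + b * Y n w))
      \<longlonglongrightarrow> (\<mu> 3 - 3 * \<mu> 1 * \<mu> 2 + 2 * \<mu> 1 ^ 3) / sqrt (\<mu> 2 - (\<mu> 1)\<^sup>2) ^ 3"
proof -
  define m where "m n k = expectation (\<lambda>w. Y n w ^ k)" for n k
  have m: "(\<lambda>n. m n k) \<longlonglongrightarrow> \<mu> k" if "k \<le> 3" for k
    using moments[OF that] by (simp add: m_def)
  have stats: "\<forall>\<^sub>F n in sequentially. expectation (\<lambda>w. a n + b * Y n w) - a n = b * m n 1
      \<and> variance (\<lambda>w. a n + b * Y n w) = b\<^sup>2 * (m n 2 - (m n 1)\<^sup>2)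
      \<and> skewness (\<lambda>w. a n + b * Y n w) = (m n 3 - 3 * m n 1 * m n 2 + 2 * m n 1 ^ 3) / sqrt (m n 2 - (m n 1)\<^sup>2) ^ 3"
    using integrable
  proof eventually_elim
    case (elim n)
    have "integrable M (\<lambda>w. Y n w ^ k)" if "k \<le> 3" for k
      using elim that by (rule integrable_power_if_abs_cube[rotated]) auto
    from this[of 1] this[of 2] this[of 3]
    have "integrable M (Y n)" "integrable M (\<lambda>w. Y n w ^ 2)" "integrable M (\<lambda>w. Y n w ^ 3)"
      by simp_all
    from moments_affine[OF this \<open>0 < b\<close>, of "a n"] show ?case
      unfolding m_def by simp
  qed
  have "(\<lambda>n. b * m n 1) \<longlonglongrightarrow> b * \<mu> 1"
    by (intro tendsto_intros m) simp
  moreover have "(\<lambda>n. b\<^sup>2 * (m n 2 - (m n 1)\<^sup>2)) \<longlonglongrightarrow> b\<^sup>2 * (\<mu> 2 - (\<mu> 1)\<^sup>2)"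
    by (intro tendsto_intros m) simp_all
  moreover have "(\<lambda>n. (m n 3 - 3 * m n 1 * m n 2 + 2 * m n 1 ^ 3) / sqrt (m n 2 - (m n 1)\<^sup>2) ^ 3)
      \<longlonglongrightarrow> (\<mu> 3 - 3 * \<mu> 1 * \<mu> 2 + 2 * \<mu> 1 ^ 3) / sqrt (\<mu> 2 - (\<mu> 1)\<^sup>2) ^ 3"
    if "\<mu> 2 \<noteq> (\<mu> 1)\<^sup>2"
    using that by (intro tendsto_intros m) simp_all
  ultimately show "(\<lambda>n. expectation (\<lambda>w. a n + b * Y n w) - a n) \<longlonglongrightarrow> b * \<mu> 1"
    and "(\<lambda>n. variance (\<lambda>w. a n + b * Y n w)) \<longlonglongrightarrow> b\<^sup>2 * (\<mu> 2 - (\<mu> 1)\<^sup>2)"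
    and "\<mu> 2 \<noteq> (\<mu> 1)\<^sup>2 \<Longrightarrow> (\<lambda>n. skewness (\<lambda>w. a n + b * Y n w))
      \<longlonglongrightarrow> (\<mu> 3 - 3 * \<mu> 1 * \<mu> 2 + 2 * \<mu> 1 ^ 3) / sqrt (\<mu> 2 - (\<mu> 1)\<^sup>2) ^ 3"
    using stats by (auto elim!: Lim_transform_eventually elim: eventually_mono)
qed

lemma asymp_equiv_if_tendsto_diff:
  fixes f g :: "nat \<Rightarrow> real"
  assumes "(\<lambda>n. f n - g n) \<longlonglongrightarrow> c" and "filterlim g at_top sequentially"
  shows "f \<sim>[sequentially] g"
proof (rule asymp_equivI')
  have "(\<lambda>n. 1 + (f n - g n) * inverse (g n)) \<longlonglongrightarrow> 1 + c * 0"
    using assms by (intro tendsto_intros tendsto_inverse_0_at_top)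
  moreover have "\<forall>\<^sub>F n in sequentially. 0 < g n"
    using assms(2) by (simp add: filterlim_at_top_dense)
  then have "\<forall>\<^sub>F n in sequentially. 1 + (f n - g n) * inverse (g n) = f n / g n"
    by eventually_elim (simp add: field_simps)
  ultimately show "(\<lambda>n. f n / g n) \<longlonglongrightarrow> 1"
    by (simp add: Lim_transform_eventually)
qed

section \<open>Exponential random variables\<close>

lemma (in prob_space) AE_exponential_pos:
  assumes "distributed M lborel V (exponential_density l)"
  shows "AE w in M. 0 < V w"
proof -
  have "AE t in lborel. 0 < exponential_density l t \<longrightarrow> 0 < t"
    using AE_lborel_singleton[of 0] by eventually_elim (auto simp: exponential_density_def)
  then show ?thesis
    by (subst distributed_AE2[OF assms]) auto
qed

lemma (in prob_space) abs_ln_power_exponential: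
  assumes "distributed M lborel V (exponential_density 1)"
  shows "integrable M (\<lambda>w. \<bar>ln (V w)\<bar> ^ k)"
    and "expectation (\<lambda>w. \<bar>ln (V w)\<bar> ^ k) = (\<integral>t. exponential_density 1 t * \<bar>ln t\<bar> ^ k \<partial>lborel)"
  using distributed_integrable[OF assms, of "\<lambda>t. \<bar>ln t\<bar> ^ k"]
    distributed_integral[OF assms, of "\<lambda>t. \<bar>ln t\<bar> ^ k"]
    integrable_exponential_density_abs_ln_power[of k]
  by (simp_all add: exponential_density_def)

lemma (in prob_space) expectation_neg_ln_power_exponential:
  assumes "distributed M lborel V (exponential_density 1)"
  shows "expectation (\<lambda>w. (- ln (V w)) ^ k) = gumbel_moment k"
  using distributed_integral[OF assms, of "\<lambda>t. (- ln t) ^ k"]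
  by (simp add: exponential_density_def gumbel_moment_def)

lemma (in prob_space) prob_neg_ln_exponential_less:
  assumes D: "distributed M lborel V (exponential_density 1)"
  shows "prob {w \<in> space M. - ln (V w) < t} = gumbel_cdf 0 1 t"
proof -
  have [measurable]: "V \<in> borel_measurable M"
    using distributed_measurable[OF D] by simp
  have "prob {w \<in> space M. - ln (V w) < t} = prob {w \<in> space M. exp (- t) < V w}"
  proof (rule measure_eq_AE)
    show "AE w in M. w \<in> {w \<in> space M. - ln (V w) < t} \<longleftrightarrow> w \<in> {w \<in> space M. exp (- t) < V w}"
      using AE_exponential_pos[OF D]
    proof eventually_elim
      case (elim w)
      then have "- ln (V w) < t \<longleftrightarrow> ln (exp (- t)) < ln (V w)"
        by auto
      with elim show ?case
        by (subst (asm) ln_less_cancel_iff) auto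
    qed
  qed auto
  also have "\<dots> = gumbel_cdf 0 1 t"
    using exponential_distributedD_gt[OF D, of "exp (- t)"] by (simp add: gumbel_cdf_def)
  finally show ?thesis .
qed

lemma has_bochner_integral_exponential_density_excess_cube:
  assumes "0 \<le> c"
  shows "has_bochner_integral lborel (\<lambda>t. exponential_density 1 t * max (t - c) 0 ^ 3) (6 * exp (- c))"
proof (rule has_bochner_integral_nn_integral)
  have "(\<integral>\<^sup>+t. ennreal (exponential_density 1 t * max (t - c) 0 ^ 3) \<partial>lborel)
      = (\<integral>\<^sup>+u. ennreal (exponential_density 1 (c + u) * max u 0 ^ 3) \<partial>lborel)"
    using nn_integral_real_affine[where c = 1 and t = c, of "\<lambda>t. ennreal (exponential_density 1 t * max (t - c) 0 ^ 3)"]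
    by simp
  also have "\<dots> = (\<integral>\<^sup>+u. ennreal (exp (- c)) * (ennreal (u ^ 3 * exp (- u)) * indicator {0..} u) \<partial>lborel)"
    using assms
    by (intro nn_integral_cong)
       (auto simp: exponential_density_def ennreal_mult'[symmetric] exp_diff exp_minus field_simps indicator_def)
  also have "\<dots> = ennreal (exp (- c)) * (\<integral>\<^sup>+u. ennreal (u ^ 3 * exp (- u)) * indicator {0..} u \<partial>lborel)"
    by (rule nn_integral_cmult) auto
  also have "\<dots> = ennreal (6 * exp (- c))"
    by (subst nn_intergal_power_times_exp_Ici) (simp add: ennreal_mult' eval_nat_numeral mult.commute)
  finally show "(\<integral>\<^sup>+t. ennreal (exponential_density 1 t * max (t - c) 0 ^ 3) \<partial>lborel)
      = ennreal (6 * exp (- c))" .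
qed (auto simp: exponential_density_def)

lemma (in prob_space) exponential_excess_cube:
  assumes D: "distributed M lborel V (exponential_density 1)" and "0 \<le> c"
  shows "integrable M (\<lambda>w. max (V w - c) 0 ^ 3)"
    and "expectation (\<lambda>w. max (V w - c) 0 ^ 3) = 6 * exp (- c)"
  using distributed_integrable[OF D, of "\<lambda>t. max (t - c) 0 ^ 3"]
    distributed_integral[OF D, of "\<lambda>t. max (t - c) 0 ^ 3"]
    has_bochner_integral_exponential_density_excess_cube[OF assms(2)]
  by (simp_all add: exponential_density_def has_bochner_integral_iff)

section \<open>Extremes of an exponential sample\<close>

lemma ln_minus_ln_pos_part_le:
  fixes b L :: real
  assumes "0 < b" "0 < L"
  shows "max (ln b - ln L) 0 \<le> max (b - L) 0 / L"
proof -
  have "ln b - ln L \<le> (b - L) / L"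
    using ln_le_minus_one[of "b / L"] assms by (simp add: ln_div diff_divide_distrib)
  then show ?thesis
    using assms by (auto simp: max_def divide_le_0_iff)
qed

lemma le_mult_square_add_inverse:
  fixes y \<delta> :: real
  assumes "0 < \<delta>"
  shows "y \<le> \<delta> * y\<^sup>2 + 1 / \<delta>"
proof -
  have "\<delta> * (2 * y) \<le> \<delta> * (\<delta> * y\<^sup>2 + 1 / \<delta>)"
    using zero_le_power2[of "\<delta> * y - 1"] assms by (simp add: power2_eq_square algebra_simps)
  then have "2 * y \<le> \<delta> * y\<^sup>2 + 1 / \<delta>"
    using assms by simp
  moreover have "0 \<le> \<delta> * y\<^sup>2 + 1 / \<delta>"
    using assms by simp
  ultimately show ?thesis
    by linarith
qed

lemma ln_minus_ln_neg_part_cube_le: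
  fixes u b L \<epsilon> \<delta> :: real
  assumes u: "0 < u" "u \<le> b" and L: "0 < L" and "0 \<le> \<epsilon>" "0 < \<delta>"
  shows "max (ln L - ln b) 0 ^ 3
    \<le> \<epsilon> ^ 3 + (4 * \<bar>ln L\<bar> ^ 3 + 4 / \<delta>) * of_bool (b \<le> L * exp (- \<epsilon>)) + 4 * \<delta> * \<bar>ln u\<bar> ^ 6"
proof (cases "b \<le> L * exp (- \<epsilon>)")
  case True
  have "ln u \<le> ln b"
    using u by simp
  then have "max (ln L - ln b) 0 \<le> \<bar>ln L\<bar> + \<bar>ln u\<bar>"
    by (simp add: max_def) arith
  then have "max (ln L - ln b) 0 ^ 3 \<le> \<bar>\<bar>ln L\<bar> + \<bar>ln u\<bar>\<bar> ^ 3"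
    by (intro power_mono) auto
  also have "\<dots> \<le> 4 * \<bar>ln L\<bar> ^ 3 + 4 * \<bar>ln u\<bar> ^ 3"
    using abs_add_cube_le[of "\<bar>ln L\<bar>" "\<bar>ln u\<bar>"] by simp
  finally have "max (ln L - ln b) 0 ^ 3 \<le> 4 * \<bar>ln L\<bar> ^ 3 + 4 * \<bar>ln u\<bar> ^ 3" .
  moreover have "\<bar>ln u\<bar> ^ 3 \<le> \<delta> * \<bar>ln u\<bar> ^ 6 + 1 / \<delta>"
    using le_mult_square_add_inverse[OF \<open>0 < \<delta>\<close>, of "\<bar>ln u\<bar> ^ 3"] by (simp flip: power_mult)
  moreover have "0 \<le> \<epsilon> ^ 3" "of_bool (b \<le> L * exp (- \<epsilon>)) = (1::real)"
    using \<open>0 \<le> \<epsilon>\<close> True by simp_all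
  ultimately show ?thesis
    by (simp only: mult_1_right distrib_right)
next
  case False
  then have "ln (L * exp (- \<epsilon>)) < ln b"
    using L u by simp
  then have "ln L - ln b \<le> \<epsilon>"
    using L by (simp add: ln_mult)
  then have "max (ln L - ln b) 0 ^ 3 \<le> \<epsilon> ^ 3"
    using \<open>0 \<le> \<epsilon>\<close> by (intro power_mono) auto
  moreover have "0 \<le> 4 * \<delta> * \<bar>ln u\<bar> ^ 6"
    using \<open>0 < \<delta>\<close> by simp
  ultimately show ?thesis
    using False by (simp only: of_bool_eq(1) mult_0_right add_0_right)
qed

locale exponential_sample = prob_space +
  fixes X :: "nat \<Rightarrow> 'a \<Rightarrow> real" and l :: real
  assumes rate_pos: "0 < l"
    and indep: "indep_vars (\<lambda>_. borel) X UNIV"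
    and exponential: "\<And>i. distributed M lborel (X i) (exponential_density l)"
begin

lemma measurable_X [measurable]: "X i \<in> borel_measurable M"
  using distributed_measurable[OF exponential] by simp

definition sample_min :: "nat \<Rightarrow> 'a \<Rightarrow> real" where
  "sample_min n w = Min ((\<lambda>i. X i w) ` {1..n})"

definition sample_max :: "nat \<Rightarrow> 'a \<Rightarrow> real" where
  "sample_max n w = Max ((\<lambda>i. X i w) ` {1..n})"

definition Z :: "nat \<Rightarrow> 'a \<Rightarrow> real" where
  "Z n w = - ln (real n * l * sample_min n w)"

definition W :: "nat \<Rightarrow> 'a \<Rightarrow> real" where
  "W n w = ln (l * sample_max n w) - ln (ln (real n))"

lemma measurable_sample_min [measurable]: "sample_min n \<in> borel_measurable M"
  unfolding sample_min_def by measurable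

lemma measurable_sample_max [measurable]: "sample_max n \<in> borel_measurable M"
  unfolding sample_max_def by measurable

lemma measurable_Z [measurable]: "Z n \<in> borel_measurable M"
  unfolding Z_def by measurable

lemma measurable_W [measurable]: "W n \<in> borel_measurable M"
  unfolding W_def by measurable

lemma AE_X_pos: "AE w in M. \<forall>i. 0 < X i w"
  using AE_exponential_pos[OF exponential] by (simp add: AE_all_countable)

lemma sample_min_pos: "1 \<le> n \<Longrightarrow> \<forall>i. 0 < X i w \<Longrightarrow> 0 < sample_min n w"
  unfolding sample_min_def by (subst Min_gr_iff) auto

lemma sample_max_in: "1 \<le> n \<Longrightarrow> \<exists>i\<in>{1..n}. sample_max n w = X i w"
proof -
  assume "1 \<le> n"
  then have "sample_max n w \<in> (\<lambda>i. X i w) ` {1..n}"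
    unfolding sample_max_def by (intro Max_in) auto
  then show ?thesis
    by auto
qed

lemma X_le_sample_max: "i \<in> {1..n} \<Longrightarrow> X i w \<le> sample_max n w"
  unfolding sample_max_def by (intro Max_ge) auto

lemma distributed_scaled_X: "distributed M lborel (\<lambda>w. l * X i w) (exponential_density 1)"
  using erlang_distributed_mult_const[OF exponential rate_pos rate_pos] rate_pos by simp

lemma distributed_scaled_sample_min:
  assumes "1 \<le> n"
  shows "distributed M lborel (\<lambda>w. real n * l * sample_min n w) (exponential_density 1)"
proof -
  have "distributed M lborel (sample_min n) (exponential_density (\<Sum>i\<in>{1..n}. l))"
    unfolding sample_min_def[abs_def] using assms rate_pos
    by (intro exponential_distributed_Min exponential indep_vars_subset[OF indep]) auto
  then have "distributed M lborel (sample_min n) (exponential_density (real n * l))"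
    by simp
  from erlang_distributed_mult_const[OF this, of "real n * l"] show ?thesis
    using assms rate_pos by simp
qed

lemma prob_sample_max_le:
  assumes "1 \<le> n" "0 \<le> c"
  shows "prob {w \<in> space M. sample_max n w \<le> c} = (1 - exp (- c * l)) ^ n"
proof -
  have "{w \<in> space M. sample_max n w \<le> c} = (\<Inter>i\<in>{1..n}. X i -` {..c} \<inter> space M)"
    using assms by (auto simp: sample_max_def)
  moreover have "prob (\<Inter>i\<in>{1..n}. X i -` {..c} \<inter> space M) = (\<Prod>i\<in>{1..n}. prob (X i -` {..c} \<inter> space M))"
    by (rule indep_varsD[OF indep]) (use assms in auto)
  ultimately have "prob {w \<in> space M. sample_max n w \<le> c} = (\<Prod>i\<in>{1..n}. prob (X i -` {..c} \<inter> space M))"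
    by simp
  also have "\<dots> = (\<Prod>i\<in>{1..n}. 1 - exp (- c * l))"
    using exponential_distributedD_le[OF exponential assms(2) rate_pos]
    by (intro prod.cong) (auto simp: vimage_def Int_def conj_commute)
  finally show ?thesis
    by simp
qed

lemma prob_Z_less: "1 \<le> n \<Longrightarrow> prob {w \<in> space M. Z n w < t} = gumbel_cdf 0 1 t"
  unfolding Z_def by (rule prob_neg_ln_exponential_less[OF distributed_scaled_sample_min])

lemma expectation_Z_power: "1 \<le> n \<Longrightarrow> expectation (\<lambda>w. Z n w ^ k) = gumbel_moment k"
  unfolding Z_def by (rule expectation_neg_ln_power_exponential[OF distributed_scaled_sample_min])

lemma Z_abs_cube:
  assumes "1 \<le> n"
  shows "integrable M (\<lambda>w. \<bar>Z n w\<bar> ^ 3)"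
    and "expectation (\<lambda>w. \<bar>Z n w\<bar> ^ 3) = (\<integral>t. exponential_density 1 t * \<bar>ln t\<bar> ^ 3 \<partial>lborel)"
  using abs_ln_power_exponential[OF distributed_scaled_sample_min[OF assms]] by (simp_all add: Z_def)

lemma W_pos_part_cube_le:
  assumes n: "2 \<le> n" and pos: "\<forall>i. 0 < X i w"
  shows "max (W n w) 0 ^ 3 \<le> (\<Sum>i\<in>{1..n}. max (l * X i w - ln n) 0 ^ 3) / ln n ^ 3"
proof -
  obtain j where j: "j \<in> {1..n}" "sample_max n w = X j w"
    using sample_max_in[of n w] n by auto
  have "0 < ln (real n)"
    using n by simp
  then have "max (W n w) 0 \<le> max (l * X j w - ln n) 0 / ln n"
    using ln_minus_ln_pos_part_le[of "l * X j w" "ln n"] pos rate_pos j by (simp add: W_def)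
  then have "max (W n w) 0 ^ 3 \<le> (max (l * X j w - ln n) 0 / ln n) ^ 3"
    by (intro power_mono) auto
  also have "\<dots> \<le> (\<Sum>i\<in>{1..n}. max (l * X i w - ln n) 0 ^ 3) / ln n ^ 3"
    using \<open>0 < ln (real n)\<close> j
    by (auto simp: power_divide intro!: divide_right_mono member_le_sum[where f = "\<lambda>i. max (l * X i w - ln n) 0 ^ 3"])
  finally show ?thesis .
qed

lemma W_neg_part_cube_le:
  assumes n: "2 \<le> n" and pos: "\<forall>i. 0 < X i w" and "0 \<le> \<epsilon>" "0 < \<delta>"
  shows "max (- W n w) 0 ^ 3 \<le> \<epsilon> ^ 3 + (4 * \<bar>ln (ln n)\<bar> ^ 3 + 4 / \<delta>) * of_bool (l * sample_max n w \<le> ln n * exp (- \<epsilon>))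
    + 4 * \<delta> * \<bar>ln (l * X 1 w)\<bar> ^ 6"
proof -
  have "0 < l * X 1 w" "l * X 1 w \<le> l * sample_max n w"
    using pos rate_pos X_le_sample_max[of 1 n w] n by auto
  then show ?thesis
    using ln_minus_ln_neg_part_cube_le[of "l * X 1 w" "l * sample_max n w" "ln n" \<epsilon> \<delta>] n assms(3,4)
    by (simp add: W_def)
qed

lemma W_abs_cube_le:
  assumes n: "2 \<le> n" and "0 < \<epsilon>" "0 < \<delta>"
  defines "p \<equiv> prob {w \<in> space M. l * sample_max n w \<le> ln n * exp (- \<epsilon>)}"
  shows "integrable M (\<lambda>w. \<bar>W n w\<bar> ^ 3)"
    and "expectation (\<lambda>w. \<bar>W n w\<bar> ^ 3) \<le> 6 / ln n ^ 3 + \<epsilon> ^ 3 + (4 * \<bar>ln (ln n)\<bar> ^ 3 + 4 / \<delta>) * p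
      + 4 * \<delta> * (\<integral>t. exponential_density 1 t * \<bar>ln t\<bar> ^ 6 \<partial>lborel)"
proof -
  define S where "S = {w \<in> space M. l * sample_max n w \<le> ln n * exp (- \<epsilon>)}"
  have [measurable]: "S \<in> sets M"
    unfolding S_def by measurable
  define f1 where "f1 w = (\<Sum>i\<in>{1..n}. max (l * X i w - ln n) 0 ^ 3) / ln n ^ 3" for w
  define f2 where "f2 w = \<epsilon> ^ 3 + (4 * \<bar>ln (ln n)\<bar> ^ 3 + 4 / \<delta>) * indicator S w
    + 4 * \<delta> * \<bar>ln (l * X 1 w)\<bar> ^ 6" for w
  define f where "f w = f1 w + f2 w" for w
  have "0 < ln (real n)"
    using n by simp
  then have f1: "integrable M f1" "expectation f1 = 6 / ln n ^ 3"
    using exponential_excess_cube[OF distributed_scaled_X] n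
    by (simp_all add: f1_def[abs_def] Bochner_Integration.integral_sum exp_minus)
  have f2: "integrable M f2" "expectation f2 = \<epsilon> ^ 3 + (4 * \<bar>ln (ln n)\<bar> ^ 3 + 4 / \<delta>) * p
      + 4 * \<delta> * (\<integral>t. exponential_density 1 t * \<bar>ln t\<bar> ^ 6 \<partial>lborel)"
    using abs_ln_power_exponential[OF distributed_scaled_X[of 1], of 6]
      integrable_real_indicator[of S M] emeasure_eq_measure[of S]
    by (simp_all add: f2_def[abs_def] p_def S_def[symmetric] prob_space)
  have f: "integrable M f" "expectation f = 6 / ln n ^ 3 + \<epsilon> ^ 3 + (4 * \<bar>ln (ln n)\<bar> ^ 3 + 4 / \<delta>) * p
      + 4 * \<delta> * (\<integral>t. exponential_density 1 t * \<bar>ln t\<bar> ^ 6 \<partial>lborel)"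
    using f1 f2 by (simp_all add: f_def[abs_def])
  have bound: "AE w in M. \<bar>W n w\<bar> ^ 3 \<le> f w"
    using AE_X_pos AE_space
  proof eventually_elim
    case (elim w)
    have "\<bar>W n w\<bar> ^ 3 = max (W n w) 0 ^ 3 + max (- W n w) 0 ^ 3"
      by (cases "0 \<le> W n w") (auto simp: max_def)
    also have "\<dots> \<le> f w"
      using W_pos_part_cube_le[OF n elim(1)] W_neg_part_cube_le[OF n elim(1), of \<epsilon> \<delta>] assms(2,3) elim(2)
      unfolding f_def f1_def f2_def by (intro add_mono) (auto simp: S_def indicator_def)
    finally show ?case .
  qed
  show "integrable M (\<lambda>w. \<bar>W n w\<bar> ^ 3)"
    using bound by (intro Bochner_Integration.integrable_bound[OF f(1)]) auto
  then show "expectation (\<lambda>w. \<bar>W n w\<bar> ^ 3) \<le> 6 / ln n ^ 3 + \<epsilon> ^ 3 + (4 * \<bar>ln (ln n)\<bar> ^ 3 + 4 / \<delta>) * p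
      + 4 * \<delta> * (\<integral>t. exponential_density 1 t * \<bar>ln t\<bar> ^ 6 \<partial>lborel)"
    using integral_mono_AE[OF _ f(1) bound] f(2) by simp
qed

lemma prob_scaled_sample_max_le_ln:
  assumes "1 \<le> n"
  shows "prob {w \<in> space M. l * sample_max n w \<le> ln n * exp (- \<epsilon>)} \<le> exp (- (real n powr (1 - exp (- \<epsilon>))))"
proof -
  define x where "x = real n powr (- exp (- \<epsilon>))"
  have x: "0 \<le> x" "x \<le> 1"
    using assms powr_mono[of "- exp (- \<epsilon>)" 0 "real n"] by (auto simp: x_def)
  have "{w \<in> space M. l * sample_max n w \<le> ln n * exp (- \<epsilon>)} = {w \<in> space M. sample_max n w \<le> ln n * exp (- \<epsilon>) / l}"
    using rate_pos by (auto simp: pos_le_divide_eq mult.commute)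
  then have "prob {w \<in> space M. l * sample_max n w \<le> ln n * exp (- \<epsilon>)} = (1 - x) ^ n"
    using prob_sample_max_le[of n "ln n * exp (- \<epsilon>) / l"] assms rate_pos by (simp add: x_def powr_def mult.commute)
  also have "\<dots> \<le> exp (- x) ^ n"
    using x exp_ge_add_one_self[of "- x"] by (intro power_mono) auto
  also have "\<dots> = exp (- (real n powr (1 - exp (- \<epsilon>))))"
    using assms by (simp add: x_def powr_diff powr_minus divide_inverse flip: exp_of_nat_mult)
  finally show ?thesis .
qed

lemma tendsto_W_abs_cube: "(\<lambda>n. expectation (\<lambda>w. \<bar>W n w\<bar> ^ 3)) \<longlonglongrightarrow> 0"
proof (rule tendstoI)
  fix e :: real assume "0 < e"
  define \<epsilon> where "\<epsilon> = min 1 (e / 2)"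
  have \<epsilon>: "0 < \<epsilon>" "\<epsilon> ^ 3 \<le> e / 2"
    using \<open>0 < e\<close> power_decreasing[of 1 3 \<epsilon>] by (auto simp: \<epsilon>_def)
  define c where "c = 1 - exp (- \<epsilon>)"
  have "0 < c"
    using \<epsilon> by (simp add: c_def)
  define K where "K = (\<integral>t. exponential_density 1 t * \<bar>ln t\<bar> ^ 6 \<partial>lborel)"
  define g where "g n = 6 / ln n ^ 3 + 4 * \<bar>ln (ln n)\<bar> ^ 3 * exp (- (real n powr c))
    + 4 * exp (- (real n powr c) / 2) * (1 + K)" for n :: nat
  have "(\<lambda>n::nat. 6 / ln n ^ 3 + 4 * \<bar>ln (ln n)\<bar> ^ 3 * exp (- (real n powr c))) \<longlonglongrightarrow> 0"
       "(\<lambda>n::nat. 4 * exp (- (real n powr c) / 2)) \<longlonglongrightarrow> 0"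
    using \<open>0 < c\<close> by real_asymp+
  from tendsto_add_zero[OF this(1) tendsto_mult_left_zero[OF this(2)]] have "g \<longlonglongrightarrow> 0"
    unfolding g_def[abs_def] .
  then have "\<forall>\<^sub>F n in sequentially. g n < e / 2"
    using \<open>0 < e\<close> by (intro order_tendstoD(2)) auto
  with eventually_ge_at_top[of 2]
  show "\<forall>\<^sub>F n in sequentially. dist (expectation (\<lambda>w. \<bar>W n w\<bar> ^ 3)) 0 < e"
  proof eventually_elim
    case (elim n)
    \<comment> \<open>\<open>\<delta>\<close> balances \<open>4 \<delta> E|ln (l X\<^sub>1)|\<^sup>6\<close> against \<open>(4 / \<delta>) P(l max X \<le> e\<^sup>-\<^sup>\<epsilon> ln n)\<close>.\<close>
    define \<delta> where "\<delta> = exp (- (real n powr c) / 2)"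
    define p where "p = prob {w \<in> space M. l * sample_max n w \<le> ln n * exp (- \<epsilon>)}"
    have "0 < \<delta>" "0 \<le> p" "p \<le> exp (- (real n powr c))"
      using prob_scaled_sample_max_le_ln[of n \<epsilon>] elim(1) by (auto simp: \<delta>_def p_def c_def)
    then have "(4 * \<bar>ln (ln n)\<bar> ^ 3 + 4 / \<delta>) * p \<le> (4 * \<bar>ln (ln n)\<bar> ^ 3 + 4 / \<delta>) * exp (- (real n powr c))"
      by (intro mult_left_mono) auto
    also have "\<dots> = 4 * \<bar>ln (ln n)\<bar> ^ 3 * exp (- (real n powr c)) + 4 * \<delta>"
      by (simp add: \<delta>_def field_simps flip: exp_add)
    finally have "expectation (\<lambda>w. \<bar>W n w\<bar> ^ 3) \<le> \<epsilon> ^ 3 + g n"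
      using W_abs_cube_le(2)[OF elim(1) \<epsilon>(1) \<open>0 < \<delta>\<close>]
      by (simp add: g_def p_def K_def \<delta>_def algebra_simps)
    moreover have "0 \<le> expectation (\<lambda>w. \<bar>W n w\<bar> ^ 3)"
      by (intro integral_nonneg_AE) auto
    ultimately show ?case
      using \<epsilon>(2) elim(2) by simp
  qed
qed

definition Y :: "nat \<Rightarrow> 'a \<Rightarrow> real" where
  "Y n w = ln (sample_max n w) - ln (sample_min n w) - ln (real n) - ln (ln (real n))"

lemma measurable_Y [measurable]: "Y n \<in> borel_measurable M"
  unfolding Y_def by measurable

lemma AE_Y_eq_Z_add_W: "\<forall>\<^sub>F n in sequentially. AE w in M. Y n w = Z n w + W n w"
  using eventually_ge_at_top[of 1]
proof eventually_elim
  case (elim n)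
  from AE_X_pos show ?case
  proof eventually_elim
    case (elim w)
    have "0 < sample_min n w" "0 < sample_max n w"
      using sample_min_pos[OF \<open>1 \<le> n\<close> elim] X_le_sample_max[of 1 n w] elim \<open>1 \<le> n\<close>
      by (auto intro: less_le_trans)
    then show ?case
      using \<open>1 \<le> n\<close> rate_pos by (simp add: Y_def Z_def W_def ln_mult)
  qed
qed

lemma eventually_Z_abs_cube: "\<forall>\<^sub>F n in sequentially. integrable M (\<lambda>w. \<bar>Z n w\<bar> ^ 3)
    \<and> expectation (\<lambda>w. \<bar>Z n w\<bar> ^ 3) \<le> (\<integral>t. exponential_density 1 t * \<bar>ln t\<bar> ^ 3 \<partial>lborel)"
  using eventually_ge_at_top[of 1] by eventually_elim (simp add: Z_abs_cube)

lemma eventually_W_abs_cube_integrable: "\<forall>\<^sub>F n in sequentially. integrable M (\<lambda>w. \<bar>W n w\<bar> ^ 3)"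
  using eventually_ge_at_top[of 2] by eventually_elim (use W_abs_cube_le(1)[of _ 1 1] in simp)

lemma tendsto_prob_Y_le: "(\<lambda>n. prob {w \<in> space M. Y n w \<le> x}) \<longlonglongrightarrow> gumbel_cdf 0 1 x"
proof -
  have "(\<lambda>n. prob {w \<in> space M. Z n w + W n w \<le> x}) \<longlonglongrightarrow> gumbel_cdf 0 1 x"
  proof (rule tendsto_prob_add_le_if_small)
    show "\<forall>\<^sub>F n in sequentially. \<forall>t. prob {w \<in> space M. Z n w < t} = gumbel_cdf 0 1 t"
      using eventually_ge_at_top[of 1] by eventually_elim (simp add: prob_Z_less)
    show "isCont (gumbel_cdf 0 1) x"
      unfolding gumbel_cdf_def by (intro continuous_intros) simp
    show "(\<lambda>n. prob {w \<in> space M. \<epsilon> \<le> \<bar>W n w\<bar>}) \<longlonglongrightarrow> 0" if "0 < \<epsilon>" for \<epsilon>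
      by (rule tendsto_prob_abs_ge_zero_if_moment[OF eventually_W_abs_cube_integrable tendsto_W_abs_cube _ that])
         simp
  qed simp_all
  moreover have "\<forall>\<^sub>F n in sequentially. prob {w \<in> space M. Z n w + W n w \<le> x} = prob {w \<in> space M. Y n w \<le> x}"
    using AE_Y_eq_Z_add_W by eventually_elim (intro measure_eq_AE, auto elim: AE_mp)
  ultimately show ?thesis
    by (rule Lim_transform_eventually)
qed

lemma tendsto_expectation_Y_power:
  assumes "k \<le> 3"
  shows "(\<lambda>n. expectation (\<lambda>w. Y n w ^ k)) \<longlonglongrightarrow> gumbel_moment k"
proof -
  have "(\<lambda>n. expectation (\<lambda>w. (Z n w + W n w) ^ k) - expectation (\<lambda>w. Z n w ^ k)) \<longlonglongrightarrow> 0"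
    by (rule tendsto_moment_add_minus_moment[OF measurable_Z measurable_W eventually_Z_abs_cube
          eventually_W_abs_cube_integrable tendsto_W_abs_cube assms])
  then have "(\<lambda>n. expectation (\<lambda>w. (Z n w + W n w) ^ k) - expectation (\<lambda>w. Z n w ^ k) + gumbel_moment k)
      \<longlonglongrightarrow> gumbel_moment k"
    using tendsto_add[OF _ tendsto_const] by fastforce
  moreover have "\<forall>\<^sub>F n in sequentially. expectation (\<lambda>w. (Z n w + W n w) ^ k) - expectation (\<lambda>w. Z n w ^ k)
      + gumbel_moment k = expectation (\<lambda>w. Y n w ^ k)"
    using AE_Y_eq_Z_add_W eventually_ge_at_top[of 1]
    by eventually_elim (auto simp: expectation_Z_power intro!: integral_cong_AE elim: AE_mp)
  ultimately show ?thesis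
    by (rule Lim_transform_eventually)
qed

lemma eventually_Y_abs_cube_integrable: "\<forall>\<^sub>F n in sequentially. integrable M (\<lambda>w. \<bar>Y n w\<bar> ^ 3)"
  using AE_Y_eq_Z_add_W eventually_Z_abs_cube eventually_W_abs_cube_integrable
proof eventually_elim
  case (elim n)
  have sum_integrable: "integrable M (\<lambda>w. \<bar>Z n w + W n w\<bar> ^ 3)"
    using elim(2,3) by (intro integrable_abs_cube_add) auto
  have sum_eq: "AE w in M. \<bar>Z n w + W n w\<bar> ^ 3 = \<bar>Y n w\<bar> ^ 3"
    using elim(1) by eventually_elim simp
  show ?case
    by (rule integrable_cong_AE_imp[OF sum_integrable _ sum_eq]) measurable
qed

lemma tendsto_statistics_affine_Y:
  assumes "0 < b"
  shows "(\<lambda>n. expectation (\<lambda>w. a n + b * Y n w) - a n) \<longlonglongrightarrow> b * euler_mascheroni"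
    and "(\<lambda>n. variance (\<lambda>w. a n + b * Y n w)) \<longlonglongrightarrow> b\<^sup>2 * pi\<^sup>2 / 6"
    and "(\<lambda>n. skewness (\<lambda>w. a n + b * Y n w)) \<longlonglongrightarrow> 12 * sqrt 6 * zeta3 / pi ^ 3"
proof -
  note stats = tendsto_moments_affine[OF measurable_Y eventually_Y_abs_cube_integrable
      tendsto_expectation_Y_power assms, of a]
  show "(\<lambda>n. expectation (\<lambda>w. a n + b * Y n w) - a n) \<longlonglongrightarrow> b * euler_mascheroni"
    using stats(1) gumbel_moment_1_2_3(1) by simp
  show "(\<lambda>n. variance (\<lambda>w. a n + b * Y n w)) \<longlonglongrightarrow> b\<^sup>2 * pi\<^sup>2 / 6"
    using stats(2) unfolding gumbel_variance by simp
  have "gumbel_moment 2 \<noteq> (gumbel_moment 1)\<^sup>2"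
    using gumbel_variance by auto
  then show "(\<lambda>n. skewness (\<lambda>w. a n + b * Y n w)) \<longlonglongrightarrow> 12 * sqrt 6 * zeta3 / pi ^ 3"
    using stats(3) unfolding gumbel_skewness by simp
qed

end

theorem proposition1:
  fixes M :: "'a measure" and X :: "nat \<Rightarrow> 'a \<Rightarrow> real"
    and l \<rho> :: real and Mn Yn :: "nat \<Rightarrow> 'a \<Rightarrow> real"
  assumes "prob_space M"
    and "l > 0" and "\<rho> > 1"
    and "prob_space.indep_vars M (\<lambda>_. borel) X UNIV"
    and "\<And>i. distributed M lborel (X i) (exponential_density l)"
    and "\<And>n w. Mn n w = (ln (Max ((\<lambda>i. X i w) ` {1..n})) - ln (Min ((\<lambda>i. X i w) ` {1..n})))
                          / ln \<rho> + 1"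
    and "\<And>n w. Yn n w = (Mn n w - 1) * ln \<rho> - ln (real n) - ln (ln (real n))"
  shows "weak_conv (\<lambda>n. cdf (distr M borel (Yn n))) (gumbel_cdf 0 1)
    \<and> (\<lambda>n. prob_space.expectation M (Mn n))
           \<sim>[at_top] (\<lambda>n. 1 + euler_mascheroni + (ln (real n) + ln (ln (real n))) / ln \<rho>)
    \<and> (\<lambda>n. prob_space.expectation M (Mn n)) \<sim>[at_top] (\<lambda>n. ln (real n) / ln \<rho>)
    \<and> (\<lambda>n. prob_space.variance M (Mn n)) \<sim>[at_top] (\<lambda>n. pi\<^sup>2 / (6 * (ln \<rho>)\<^sup>2))
    \<and> (\<lambda>n. prob_space.skewness M (Mn n)) \<sim>[at_top] (\<lambda>n. 12 * sqrt 6 * zeta3 / pi ^ 3)"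
proof -
  interpret exponential_sample M X l
    using assms(1-5) by (simp add: exponential_sample_def exponential_sample_axioms_def)
  have "0 < ln \<rho>"
    using assms(3) by simp
  have "Yn = Y"
    using assms(6,7) \<open>0 < ln \<rho>\<close> by (simp add: fun_eq_iff Y_def sample_max_def sample_min_def)
  define a where "a n = 1 + (ln (real n) + ln (ln (real n))) / ln \<rho>" for n :: nat
  have "Mn n w = a n + 1 / ln \<rho> * Y n w" for n w
    unfolding assms(6) using \<open>0 < ln \<rho>\<close>
    by (simp add: a_def Y_def sample_max_def sample_min_def field_simps)
  then have Mn: "Mn n = (\<lambda>w. a n + 1 / ln \<rho> * Y n w)" for n
    by auto
  note stats = tendsto_statistics_affine_Y[of "1 / ln \<rho>" a]
  have "weak_conv (\<lambda>n. cdf (distr M borel (Yn n))) (gumbel_cdf 0 1)"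
    using tendsto_prob_Y_le \<open>Yn = Y\<close>
    by (simp add: weak_conv_def cdf_def measure_distr vimage_def Int_def conj_commute)
  \<comment> \<open>In fact \<open>E M\<^sub>n = a n + \<gamma> / ln \<rho> + o(1)\<close>; the comparison function has \<open>\<gamma>\<close> in place
    of \<open>\<gamma> / ln \<rho>\<close>, a constant difference that \<open>\<sim>\<close> absorbs.\<close>
  moreover have "(\<lambda>n. expectation (Mn n)) \<sim>[sequentially]
      (\<lambda>n. 1 + euler_mascheroni + (ln (real n) + ln (ln (real n))) / ln \<rho>)"
    unfolding Mn
  proof (rule asymp_equiv_if_tendsto_diff)
    show "(\<lambda>n. expectation (\<lambda>w. a n + 1 / ln \<rho> * Y n w) - (1 + euler_mascheroni + (ln n + ln (ln n)) / ln \<rho>))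
        \<longlonglongrightarrow> 1 / ln \<rho> * euler_mascheroni - euler_mascheroni"
      using tendsto_diff[OF stats(1) tendsto_const[of euler_mascheroni]] \<open>0 < ln \<rho>\<close>
      by (simp add: a_def algebra_simps)
    show "filterlim (\<lambda>n. 1 + euler_mascheroni + (ln (real n) + ln (ln (real n))) / ln \<rho>) at_top sequentially"
      using \<open>0 < ln \<rho>\<close> by real_asymp
  qed
  moreover have "(\<lambda>n::nat. 1 + euler_mascheroni + (ln (real n) + ln (ln (real n))) / ln \<rho>)
      \<sim>[sequentially] (\<lambda>n. ln (real n) / ln \<rho>)"
    using \<open>0 < ln \<rho>\<close> by real_asymp
  moreover have "(\<lambda>n. variance (Mn n)) \<sim>[sequentially] (\<lambda>n. pi\<^sup>2 / (6 * (ln \<rho>)\<^sup>2))"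
    unfolding Mn using stats(2) \<open>0 < ln \<rho>\<close>
    by (intro tendsto_imp_asymp_equiv_const) (simp_all add: power_divide mult.commute)
  moreover have "(\<lambda>n. skewness (Mn n)) \<sim>[sequentially] (\<lambda>n. 12 * sqrt 6 * zeta3 / pi ^ 3)"
    unfolding Mn using stats(3) \<open>0 < ln \<rho>\<close> zeta3_pos
    by (intro tendsto_imp_asymp_equiv_const) simp_all
  ultimately show ?thesis
    using asymp_equiv_trans by blast
qed

end
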